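(* Let $S$ be a semilattice and $\omega$ a submultiplicative weight on $S$. The following are equivalent: (i) $\ell^1_\omega(S)$ is AMNM; (ii) for every $\varepsilon>0$ there exists $\delta>0$ such that whenever $\phi:S\to\{0,1\}$ satisfies $\sup_{e,f\in S}\frac{|\phi(ef)-\phi(e)\phi(f)|}{\omega(e)\omega(f)}\le\delta$, there exists a subset $F\subseteq S$ which is either empty or a filter such that $\sup_{e\in S}\frac{|\chi_F(e)-\phi(e)|}{\omega(e)}\le\varepsilon$, where $\chi_F$ is the indicator function of $F$.
   Context: A semilattice is a commutative semigroup in which every element is idempotent, ordered by $x\preceq y$ iff $xy=x$. A weight is a function $\omega:S\to(0,\infty)$, submultiplicative if $\omega(xy)\le\omega(x)\omega(y)$. $\ell^1_\omega(S)$ is the Banach space of $a:S\to\mathbb C$ with $\|a\|=\sum_s|a(s)|\omega(s)<\infty$, a Banach algebra under convolution ($\delta_x*\delta_y=\delta_{xy}$). A filter in $S$ is a non-empty subset $F$ closed under multiplication and upward closed (if $y\in F$ and $x\succeq y$ then $x\in F$). For a bounded linear map $T$ between Banach algebras, $\operatorname{def}(T)=\sup\{\|T(xy)-T(x)T(y)\|:\|x\|,\|y\|\le1\}$; $\operatorname{Mult}(A,\mathbb C)$ is the set of bounded multiplicative linear functionals on $A$ (including $0$). $A$ is AMNM if for every $\varepsilon>0$ there is $\delta>0$ such that every $\psi\in A^*$ with $\operatorname{def}(\psi)\le\delta$ satisfies $\operatorname{dist}_{A^*}(\psi,\operatorname{Mult}(A,\mathbb C))\le\varepsilon$. *)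

theory Defs
  imports "HOL-Analysis.Analysis"
begin

text \<open>A semilattice S is modelled as a type of class semilattice_inf; the
  semigroup product x y is inf x y, and the order x \<preceq> y (iff x y = x) is
  the class order x \<le> y.\<close>

definition sl_weight :: "('a::semilattice_inf \<Rightarrow> real) \<Rightarrow> bool" where
  "sl_weight \<omega> \<longleftrightarrow> (\<forall>s. 0 < \<omega> s) \<and> (\<forall>x y. \<omega> (inf x y) \<le> \<omega> x * \<omega> y)"

definition sl_filter :: "'a::semilattice_inf set \<Rightarrow> bool" where
  "sl_filter F \<longleftrightarrow> F \<noteq> {} \<and> (\<forall>x\<in>F. \<forall>y\<in>F. inf x y \<in> F) \<and>
     (\<forall>y\<in>F. \<forall>x. y \<le> x \<longrightarrow> x \<in> F)"

definition l1w :: "('a \<Rightarrow> real) \<Rightarrow> ('a \<Rightarrow> complex) set" where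
  "l1w \<omega> = {a. (\<lambda>s. norm (a s) * \<omega> s) summable_on UNIV}"

definition l1w_norm :: "('a \<Rightarrow> real) \<Rightarrow> ('a \<Rightarrow> complex) \<Rightarrow> real" where
  "l1w_norm \<omega> a = (\<Sum>\<^sub>\<infinity>s. norm (a s) * \<omega> s)"

definition sl_conv :: "('a::semilattice_inf \<Rightarrow> complex) \<Rightarrow> ('a \<Rightarrow> complex) \<Rightarrow> 'a \<Rightarrow> complex" where
  "sl_conv a b = (\<lambda>t. \<Sum>\<^sub>\<infinity>(s,u)\<in>{(s,u). inf s u = t}. a s * b u)"

definition l1w_dual :: "('a \<Rightarrow> real) \<Rightarrow> (('a \<Rightarrow> complex) \<Rightarrow> complex) set" where
  "l1w_dual \<omega> = {\<psi>.
     (\<forall>a\<in>l1w \<omega>. \<forall>b\<in>l1w \<omega>. \<psi> (\<lambda>s. a s + b s) = \<psi> a + \<psi> b) \<and>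
     (\<forall>c. \<forall>a\<in>l1w \<omega>. \<psi> (\<lambda>s. c * a s) = c * \<psi> a) \<and>
     (\<exists>C. \<forall>a\<in>l1w \<omega>. norm (\<psi> a) \<le> C * l1w_norm \<omega> a)}"

definition l1w_mult :: "('a::semilattice_inf \<Rightarrow> real) \<Rightarrow> (('a \<Rightarrow> complex) \<Rightarrow> complex) set" where
  "l1w_mult \<omega> = {\<psi> \<in> l1w_dual \<omega>.
     \<forall>a\<in>l1w \<omega>. \<forall>b\<in>l1w \<omega>. \<psi> (sl_conv a b) = \<psi> a * \<psi> b}"

definition l1w_def :: "('a::semilattice_inf \<Rightarrow> real) \<Rightarrow> (('a \<Rightarrow> complex) \<Rightarrow> complex) \<Rightarrow> real" where
  "l1w_def \<omega> \<psi> = Sup {norm (\<psi> (sl_conv a b) - \<psi> a * \<psi> b) | a b.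
      a \<in> l1w \<omega> \<and> b \<in> l1w \<omega> \<and> l1w_norm \<omega> a \<le> 1 \<and> l1w_norm \<omega> b \<le> 1}"

definition l1w_dual_dist :: "('a \<Rightarrow> real) \<Rightarrow> (('a \<Rightarrow> complex) \<Rightarrow> complex) \<Rightarrow> (('a \<Rightarrow> complex) \<Rightarrow> complex) \<Rightarrow> real" where
  "l1w_dual_dist \<omega> \<psi> \<mu> = Sup {norm (\<psi> a - \<mu> a) | a. a \<in> l1w \<omega> \<and> l1w_norm \<omega> a \<le> 1}"

definition l1w_dist_mult :: "('a::semilattice_inf \<Rightarrow> real) \<Rightarrow> (('a \<Rightarrow> complex) \<Rightarrow> complex) \<Rightarrow> real" where
  "l1w_dist_mult \<omega> \<psi> = Inf (l1w_dual_dist \<omega> \<psi> ` l1w_mult \<omega>)"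

definition l1w_AMNM :: "('a::semilattice_inf \<Rightarrow> real) \<Rightarrow> bool" where
  "l1w_AMNM \<omega> \<longleftrightarrow> (\<forall>\<epsilon>>0. \<exists>\<delta>>0. \<forall>\<psi>\<in>l1w_dual \<omega>.
      l1w_def \<omega> \<psi> \<le> \<delta> \<longrightarrow> l1w_dist_mult \<omega> \<psi> \<le> \<epsilon>)"

end

theory Submission
  imports Defs
begin

text \<open>
  Both conditions are reduced to statements about the point masses \<open>\<delta>\<^sub>e\<close>, which have norm
  \<open>\<omega>(e)\<close>, multiply as \<open>\<delta>\<^sub>e * \<delta>\<^sub>f = \<delta>\<^sub>e\<^sub>f\<close> and span a dense subspace of \<open>\<ell>\<^sup>1\<^sub>\<omega>(S)\<close>.  So a bounded
  functional is controlled by its values on point masses; a function \<open>g\<close> with \<open>|g| \<le> K \<omega>\<close>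
  defines the functional \<open>a \<mapsto> \<Sum> a(s) g(s)\<close>, whose defect is at most \<open>D\<close> when
  \<open>|g(ef) - g(e) g(f)| \<le> D \<omega>(e) \<omega>(f)\<close>; and the characters are exactly the functionals given
  by indicators of filters (or of \<open>{}\<close>).
  (i) \<Longrightarrow> (ii): a 0/1-valued \<open>\<phi>\<close> of small weighted defect gives a functional of small
  defect, AMNM gives a nearby character, and its filter is the one sought.
  (ii) \<Longrightarrow> (i): if \<open>\<psi>\<close> has defect \<open>r\<^sup>2\<close>, its values on point masses are almost idempotent and
  round to a 0/1-valued function of defect \<open>5r\<close>; (ii) yields a filter whose character is
  close to \<open>\<psi>\<close> on point masses, hence in norm.
\<close>

lemma weight_pos: "sl_weight \<omega> \<Longrightarrow> 0 < \<omega> s"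
  unfolding sl_weight_def by auto

lemma weight_inf: "sl_weight \<omega> \<Longrightarrow> \<omega> (inf s u) \<le> \<omega> s * \<omega> u"
  unfolding sl_weight_def by auto

text \<open>Idempotency forces \<open>\<omega>(s) = \<omega>(s s) \<le> \<omega>(s)\<^sup>2\<close>, so weights on semilattices are \<open>\<ge> 1\<close>;
  in particular \<open>\<ell>\<^sup>1\<^sub>\<omega>(S) \<subseteq> \<ell>\<^sup>1(S)\<close>.\<close>
lemma weight_ge_1:
  assumes "sl_weight \<omega>" shows "1 \<le> \<omega> s"
proof -
  have "\<omega> s \<le> \<omega> s * \<omega> s" using weight_inf[OF assms, of s s] by simp
  then show ?thesis using weight_pos[OF assms, of s] by simp
qed

lemma weighted_growth_nonneg:
  assumes w: "sl_weight \<omega>" and g: "\<And>t. norm (g t) \<le> K * \<omega> t" shows "0 \<le> K"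
  using order_trans[OF norm_ge_zero g] weight_pos[OF w] by (meson zero_le_mult_iff not_less)

lemma infsum_diff:
  fixes f g :: "'a \<Rightarrow> 'b::{topological_ab_group_add,t2_space}"
  assumes "f summable_on A" "g summable_on A"
  shows "(\<Sum>\<^sub>\<infinity>x\<in>A. f x - g x) = infsum f A - infsum g A"
proof -
  have "(\<lambda>x. - g x) summable_on A" using assms(2) by (simp add: summable_on_uminus)
  from infsum_add[OF assms(1) this] show ?thesis by (simp add: infsum_uminus)
qed

lemma product_abs_summable:
  fixes f :: "'a \<Rightarrow> 'c::{real_normed_div_algebra,banach,second_countable_topology}" and g :: "'b \<Rightarrow> 'c"
  assumes f: "(\<lambda>s. norm (f s)) summable_on UNIV" and g: "(\<lambda>u. norm (g u)) summable_on UNIV"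
  shows "(\<lambda>(s,u). norm (f s * g u)) summable_on UNIV"
proof -
  have inner: "(\<Sum>\<^sub>\<infinity>u. norm (f s * g u)) = norm (f s) * (\<Sum>\<^sub>\<infinity>u. norm (g u))" for s
    by (simp add: norm_mult infsum_cmult_right')
  have "(\<lambda>p. norm ((\<lambda>(s,u). f s * g u) p)) summable_on Sigma UNIV (\<lambda>_. UNIV)"
  proof (rule Infinite_Sum.abs_summable_on_Sigma_iff[where A=UNIV and B="\<lambda>_. UNIV", THEN iffD2],
      intro conjI ballI)
    show "(\<lambda>u. norm (case (s, u) of (s, u) \<Rightarrow> f s * g u)) summable_on UNIV" for s
      using summable_on_cmult_right[OF g, of "norm (f s)"] by (simp add: norm_mult)
    show "(\<lambda>s. norm (\<Sum>\<^sub>\<infinity>u. norm (case (s, u) of (s, u) \<Rightarrow> f s * g u))) summable_on UNIV"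
      using summable_on_cmult_left[OF f] by (simp add: inner infsum_nonneg)
  qed
  then show ?thesis by (simp add: case_prod_unfold)
qed

lemma infsum_product:
  fixes f :: "'a \<Rightarrow> 'c::{real_normed_div_algebra,banach,second_countable_topology}" and g :: "'b \<Rightarrow> 'c"
  assumes f: "(\<lambda>s. norm (f s)) summable_on UNIV" and g: "(\<lambda>u. norm (g u)) summable_on UNIV"
  shows "(\<Sum>\<^sub>\<infinity>(s,u). f s * g u) = (\<Sum>\<^sub>\<infinity>s. f s) * (\<Sum>\<^sub>\<infinity>u. g u)"
proof -
  have fs: "f summable_on UNIV" and gs: "g summable_on UNIV"
    using f g abs_summable_summable by blast+
  have "(\<lambda>(s,u). f s * g u) summable_on Sigma UNIV (\<lambda>_. UNIV)"
    using abs_summable_summable[of "\<lambda>(s,u). f s * g u"] product_abs_summable[OF f g]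
    by (simp add: case_prod_unfold)
  then have "(\<Sum>\<^sub>\<infinity>(s,u). f s * g u) = (\<Sum>\<^sub>\<infinity>s. \<Sum>\<^sub>\<infinity>u. f s * g u)"
    using infsum_Sigma'_banach by fastforce
  also have "\<dots> = (\<Sum>\<^sub>\<infinity>s. f s * (\<Sum>\<^sub>\<infinity>u. g u))"
    using infsum_cmult_right[OF gs] by simp
  also have "\<dots> = (\<Sum>\<^sub>\<infinity>s. f s) * (\<Sum>\<^sub>\<infinity>u. g u)"
    using infsum_cmult_left[OF fs] by simp
  finally show ?thesis .
qed

text \<open>A summable family may be summed fibre by fibre along any map \<open>m\<close>; this is how
  convolution (fibres of \<open>(s,u) \<mapsto> s u\<close>) is handled.\<close>
lemma summable_infsum_fibres:
  fixes h :: "'p \<Rightarrow> 'b::banach" and m :: "'p \<Rightarrow> 't"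
  assumes "h summable_on UNIV"
  shows "(\<lambda>t. \<Sum>\<^sub>\<infinity>p\<in>{p. m p = t}. h p) summable_on UNIV"
    and "(\<Sum>\<^sub>\<infinity>t. \<Sum>\<^sub>\<infinity>p\<in>{p. m p = t}. h p) = (\<Sum>\<^sub>\<infinity>p. h p)"
proof -
  define j where "j = (\<lambda>p. (m p, p))"
  have bij: "bij_betw j UNIV (Sigma UNIV (\<lambda>t. {p. m p = t}))"
    unfolding j_def by (rule bij_betwI[where g=snd]) auto
  have S: "(\<lambda>(t,p). h p) summable_on Sigma UNIV (\<lambda>t. {p. m p = t})"
    using summable_on_reindex_bij_betw[OF bij, of "\<lambda>(t,p). h p"] assms by (simp add: j_def)
  show "(\<lambda>t. \<Sum>\<^sub>\<infinity>p\<in>{p. m p = t}. h p) summable_on UNIV"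
    using summable_on_Sigma_banach[of "\<lambda>t p. h p" UNIV "\<lambda>t. {p. m p = t}"] S by simp
  have "(\<Sum>\<^sub>\<infinity>t. \<Sum>\<^sub>\<infinity>p\<in>{p. m p = t}. h p) = (\<Sum>\<^sub>\<infinity>(t,p)\<in>Sigma UNIV (\<lambda>t. {p. m p = t}). h p)"
    using infsum_Sigma'_banach[of "\<lambda>t p. h p" UNIV "\<lambda>t. {p. m p = t}"] S by simp
  also have "\<dots> = (\<Sum>\<^sub>\<infinity>p. h p)"
    using infsum_reindex_bij_betw[OF bij, of "\<lambda>(t,p). h p"] by (simp add: j_def)
  finally show "(\<Sum>\<^sub>\<infinity>t. \<Sum>\<^sub>\<infinity>p\<in>{p. m p = t}. h p) = (\<Sum>\<^sub>\<infinity>p. h p)" .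
qed

lemma fibre_inf: "{p. (case p of (s, u) \<Rightarrow> inf s u) = t} = {(s,u). inf s u = t}"
  by auto

section \<open>The space \<open>\<ell>\<^sup>1\<^sub>\<omega>(S)\<close> and point masses\<close>

lemma l1w_summable_weighted: "a \<in> l1w \<omega> \<Longrightarrow> (\<lambda>s. norm (a s) * \<omega> s) summable_on UNIV"
  unfolding l1w_def by auto

lemma l1w_norm_nonneg: "sl_weight \<omega> \<Longrightarrow> 0 \<le> l1w_norm \<omega> a"
  unfolding l1w_norm_def by (rule infsum_nonneg) (simp add: weight_pos less_imp_le)

lemma l1w_abs_summable:
  assumes w: "sl_weight \<omega>" and a: "a \<in> l1w \<omega>"
  shows "(\<lambda>s. norm (a s)) summable_on UNIV"
  by (rule summable_on_comparison_test[OF l1w_summable_weighted[OF a]])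
     (use weight_ge_1[OF w] in \<open>auto simp: mult_le_cancel_left1\<close>)

lemma l1w_zero: "(\<lambda>s. 0) \<in> l1w \<omega>" and l1w_norm_zero: "l1w_norm \<omega> (\<lambda>s. 0) = 0"
  unfolding l1w_def l1w_norm_def by simp_all

lemma l1w_add:
  assumes w: "sl_weight \<omega>" and a: "a \<in> l1w \<omega>" and b: "b \<in> l1w \<omega>"
  shows "(\<lambda>s. a s + b s) \<in> l1w \<omega>"
proof -
  have "(\<lambda>s. norm (a s) * \<omega> s + norm (b s) * \<omega> s) summable_on UNIV"
    by (rule summable_on_add[OF l1w_summable_weighted[OF a] l1w_summable_weighted[OF b]])
  moreover have "norm (a s + b s) * \<omega> s \<le> norm (a s) * \<omega> s + norm (b s) * \<omega> s" for s
    using mult_right_mono[OF norm_triangle_ineq less_imp_le[OF weight_pos[OF w]]]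
    by (simp add: distrib_right)
  ultimately show ?thesis
    unfolding l1w_def mem_Collect_eq by (rule summable_on_comparison_test) (simp_all add: weight_pos[OF w] less_imp_le)
qed

definition point_mass :: "'a \<Rightarrow> 'a \<Rightarrow> complex" where
  "point_mass e = (\<lambda>x. if x = e then 1 else 0)"

lemma infsum_at_point:
  "(\<Sum>\<^sub>\<infinity>x\<in>A. (if x = e then c else 0 :: 'b::{comm_monoid_add,t2_space})) = (if e \<in> A then c else 0)"
proof -
  have "(\<Sum>\<^sub>\<infinity>x\<in>A. (if x = e then c else 0 :: 'b)) = (\<Sum>\<^sub>\<infinity>x\<in>A\<inter>{e}. (if x = e then c else 0 :: 'b))"
    by (rule infsum_cong_neutral) auto
  then show ?thesis by (cases "e \<in> A") auto
qed

lemma point_mass_l1w: "(\<lambda>x. c * point_mass e x) \<in> l1w \<omega>"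
  and point_mass_norm: "l1w_norm \<omega> (\<lambda>x. c * point_mass e x) = norm c * \<omega> e"
proof -
  have eq: "(\<lambda>s. norm (c * point_mass e s) * \<omega> s) = (\<lambda>s. if s = e then norm c * \<omega> e else 0)"
    by (auto simp: point_mass_def)
  have "(\<lambda>s. if s = e then norm c * \<omega> e else 0) summable_on UNIV"
    by (rule summable_on_cong_neutral[where S="{e}", THEN iffD1]) auto
  then show "(\<lambda>x. c * point_mass e x) \<in> l1w \<omega>" unfolding l1w_def mem_Collect_eq eq .
  show "l1w_norm \<omega> (\<lambda>x. c * point_mass e x) = norm c * \<omega> e"
    unfolding l1w_norm_def eq by (simp add: infsum_at_point)
qed

lemma point_mass_l1w': "point_mass e \<in> l1w \<omega>"
  using point_mass_l1w[of 1 e \<omega>] by simp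

text \<open>Every element is a finite combination of point masses plus a remainder of arbitrarily
  small norm; this density of point masses is what makes functionals determined by them.\<close>
lemma l1w_finite_truncation:
  assumes w: "sl_weight \<omega>" and a: "a \<in> l1w \<omega>" and eta: "0 < \<eta>"
  obtains A where "finite A" "a = (\<lambda>x. (\<Sum>s\<in>A. a s * point_mass s x) + (if x \<in> A then 0 else a x))"
    "(\<lambda>x. if x \<in> A then 0 else a x) \<in> l1w \<omega>" "l1w_norm \<omega> (\<lambda>x. if x \<in> A then 0 else a x) \<le> \<eta>"
    "(\<Sum>s\<in>A. norm (a s) * \<omega> s) \<le> l1w_norm \<omega> a"
proof -
  let ?n = "\<lambda>s. norm (a s) * \<omega> s"
  have n: "?n summable_on UNIV" by (rule l1w_summable_weighted[OF a])
  obtain A where A: "finite A" and Ad: "dist (sum ?n A) (infsum ?n UNIV) \<le> \<eta>"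
    using infsum_finite_approximation[OF n eta] by blast
  define r where "r = (\<lambda>x. if x \<in> A then 0 else a x)"
  have split: "a = (\<lambda>x. (\<Sum>s\<in>A. a s * point_mass s x) + r x)"
    using A by (auto simp: r_def point_mass_def if_distrib sum.If_cases cong: if_cong)
  have rl: "r \<in> l1w \<omega>" unfolding l1w_def mem_Collect_eq
    by (rule summable_on_comparison_test[OF n]) (auto simp: r_def weight_pos[OF w] less_imp_le)
  have nA: "(\<lambda>x. if x \<in> A then ?n x else 0) summable_on UNIV"
    by (rule summable_on_cong_neutral[where S=A, THEN iffD1]) (use A in auto)
  have "(\<Sum>\<^sub>\<infinity>x. (if x \<in> A then ?n x else 0)) = (\<Sum>\<^sub>\<infinity>x\<in>A. ?n x)"
    by (rule infsum_cong_neutral) auto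
  then have sA: "(\<Sum>\<^sub>\<infinity>x. (if x \<in> A then ?n x else 0)) = sum ?n A" using A by simp
  have "(\<lambda>x. norm (r x) * \<omega> x) = (\<lambda>x. ?n x - (if x \<in> A then ?n x else 0))"
    unfolding r_def by auto
  then have rnorm: "l1w_norm \<omega> r = l1w_norm \<omega> a - sum ?n A"
    unfolding l1w_norm_def using infsum_diff[OF n nA] sA by simp
  have le: "sum ?n A \<le> l1w_norm \<omega> a"
    unfolding l1w_norm_def by (rule finite_sum_le_infsum[OF n A]) (simp_all add: weight_pos[OF w] less_imp_le)
  then have "l1w_norm \<omega> r \<le> \<eta>" using Ad rnorm unfolding l1w_norm_def dist_real_def by simp
  with that[OF A split[unfolded r_def]] rl le show ?thesis by (simp add: r_def)
qed

lemma l1w_pair_summable: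
  assumes w: "sl_weight \<omega>" and a: "a \<in> l1w \<omega>" and b: "b \<in> l1w \<omega>"
  shows "(\<lambda>(s,u). (norm (a s) * \<omega> s) * (norm (b u) * \<omega> u)) summable_on UNIV"
    and "(\<Sum>\<^sub>\<infinity>(s,u). (norm (a s) * \<omega> s) * (norm (b u) * \<omega> u)) = l1w_norm \<omega> a * l1w_norm \<omega> b"
proof -
  have na: "(\<lambda>s. norm (norm (a s) * \<omega> s)) summable_on UNIV"
    using l1w_summable_weighted[OF a] weight_pos[OF w] by (simp add: abs_mult less_imp_le)
  have nb: "(\<lambda>s. norm (norm (b s) * \<omega> s)) summable_on UNIV"
    using l1w_summable_weighted[OF b] weight_pos[OF w] by (simp add: abs_mult less_imp_le)
  show "(\<lambda>(s,u). (norm (a s) * \<omega> s) * (norm (b u) * \<omega> u)) summable_on UNIV"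
    using product_abs_summable[OF na nb] weight_pos[OF w]
    by (simp add: abs_mult less_imp_le case_prod_unfold)
  show "(\<Sum>\<^sub>\<infinity>(s,u). (norm (a s) * \<omega> s) * (norm (b u) * \<omega> u)) = l1w_norm \<omega> a * l1w_norm \<omega> b"
    unfolding l1w_norm_def by (rule infsum_product[OF na nb])
qed

lemma l1w_pair_abs_summable:
  assumes w: "sl_weight \<omega>" and a: "a \<in> l1w \<omega>" and b: "b \<in> l1w \<omega>"
  shows "(\<lambda>p. norm ((\<lambda>(s,u). a s * b u) p)) summable_on UNIV"
  using product_abs_summable[OF l1w_abs_summable[OF w a] l1w_abs_summable[OF w b]]
  by (simp add: case_prod_unfold)

section \<open>Convolution\<close>

lemma conv_point_mass:
  "sl_conv (\<lambda>x. c * point_mass e x) (\<lambda>x. d * point_mass f x) = (\<lambda>x. (c * d) * point_mass (inf e f) x)"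
proof
  fix t
  have "(\<lambda>(s,u). c * point_mass e s * (d * point_mass f u)) = (\<lambda>p. if p = (e,f) then c * d else 0)"
    by (auto simp: point_mass_def)
  then show "sl_conv (\<lambda>x. c * point_mass e x) (\<lambda>x. d * point_mass f x) t = (c * d) * point_mass (inf e f) t"
    unfolding sl_conv_def by (simp add: infsum_at_point point_mass_def)
qed

lemma conv_point_mass': "sl_conv (point_mass e) (point_mass f) = point_mass (inf e f)"
  using conv_point_mass[of 1 e 1 f] by simp

text \<open>Submultiplicativity of the weight makes \<open>\<ell>\<^sup>1\<^sub>\<omega>\<close> closed under convolution, with
  \<open>\<parallel>a * b\<parallel> \<le> \<parallel>a\<parallel> \<parallel>b\<parallel>\<close>.\<close>
lemma conv_l1w:
  assumes w: "sl_weight \<omega>" and a: "a \<in> l1w \<omega>" and b: "b \<in> l1w \<omega>"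
  shows "sl_conv a b \<in> l1w \<omega>" and "l1w_norm \<omega> (sl_conv a b) \<le> l1w_norm \<omega> a * l1w_norm \<omega> b"
proof -
  let ?N = "\<lambda>(s,u). (norm (a s) * \<omega> s) * (norm (b u) * \<omega> u)"
  let ?P = "\<lambda>(s,u). a s * b u"
  let ?Q = "\<lambda>t. \<Sum>\<^sub>\<infinity>p\<in>{(s,u). inf s u = t}. ?N p"
  have N: "?N summable_on UNIV" by (rule l1w_pair_summable(1)[OF w a b])
  have Q: "?Q summable_on UNIV"
    using summable_infsum_fibres(1)[OF N, of "\<lambda>(s,u). inf s u"] by (simp only: fibre_inf)
  have SQ: "(\<Sum>\<^sub>\<infinity>t. ?Q t) = l1w_norm \<omega> a * l1w_norm \<omega> b"
    using summable_infsum_fibres(2)[OF N, of "\<lambda>(s,u). inf s u"] l1w_pair_summable(2)[OF w a b]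
    by (simp only: fibre_inf)
  have P: "(\<lambda>p. norm (?P p)) summable_on UNIV" by (rule l1w_pair_abs_summable[OF w a b])
  have bound: "norm (sl_conv a b t) * \<omega> t \<le> ?Q t" for t
  proof -
    let ?F = "{(s,u). inf s u = t}"
    have PF: "(\<lambda>p. norm (?P p)) summable_on ?F" by (rule summable_on_subset_banach[OF P]) auto
    have "norm (sl_conv a b t) * \<omega> t \<le> (\<Sum>\<^sub>\<infinity>p\<in>?F. norm (?P p)) * \<omega> t"
      unfolding sl_conv_def
      by (rule mult_right_mono[OF norm_infsum_bound[OF PF]]) (simp add: weight_pos[OF w] less_imp_le)
    also have "\<dots> = (\<Sum>\<^sub>\<infinity>p\<in>?F. norm (?P p) * \<omega> t)"
      by (rule infsum_cmult_left[symmetric, OF PF])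
    also have "\<dots> \<le> (\<Sum>\<^sub>\<infinity>p\<in>?F. ?N p)"
    proof (rule infsum_mono[OF summable_on_cmult_left[OF PF]])
      show "?N summable_on ?F" by (rule summable_on_subset_banach[OF N]) auto
      fix p assume "p \<in> ?F"
      then obtain s u where p: "p = (s,u)" and t: "t = inf s u" by auto
      have "norm (a s) * norm (b u) * \<omega> (inf s u) \<le> norm (a s) * norm (b u) * (\<omega> s * \<omega> u)"
        by (rule mult_left_mono[OF weight_inf[OF w]]) simp
      then show "norm (?P p) * \<omega> t \<le> ?N p" by (simp add: p t norm_mult algebra_simps)
    qed
    finally show ?thesis .
  qed
  have conv: "(\<lambda>t. norm (sl_conv a b t) * \<omega> t) summable_on UNIV"
    by (rule summable_on_comparison_test[OF Q]) (use bound in \<open>auto simp: weight_pos[OF w] less_imp_le\<close>)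
  then show "sl_conv a b \<in> l1w \<omega>" unfolding l1w_def by simp
  have "l1w_norm \<omega> (sl_conv a b) \<le> (\<Sum>\<^sub>\<infinity>t. ?Q t)"
    unfolding l1w_norm_def by (rule infsum_mono[OF conv Q bound])
  then show "l1w_norm \<omega> (sl_conv a b) \<le> l1w_norm \<omega> a * l1w_norm \<omega> b" using SQ by simp
qed

lemma conv_pairing:
  assumes w: "sl_weight \<omega>" and a: "a \<in> l1w \<omega>" and b: "b \<in> l1w \<omega>"
    and g: "\<And>t. norm (g t) \<le> K * \<omega> t"
  shows "(\<lambda>(s,u). a s * b u * g (inf s u)) summable_on UNIV"
    and "(\<Sum>\<^sub>\<infinity>t. sl_conv a b t * g t) = (\<Sum>\<^sub>\<infinity>(s,u). a s * b u * g (inf s u))"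
proof -
  let ?N = "\<lambda>(s,u). (norm (a s) * \<omega> s) * (norm (b u) * \<omega> u)"
  let ?h = "\<lambda>(s,u). a s * b u * g (inf s u)"
  have K: "0 \<le> K" by (rule weighted_growth_nonneg[OF w g])
  have KN: "(\<lambda>p. K * ?N p) summable_on UNIV"
    by (rule summable_on_cmult_right[OF l1w_pair_summable(1)[OF w a b]])
  have "norm (?h (s,u)) \<le> K * ?N (s,u)" for s u
  proof -
    have "norm (?h (s,u)) = norm (a s) * norm (b u) * norm (g (inf s u))"
      by (simp add: norm_mult)
    also have "\<dots> \<le> norm (a s) * norm (b u) * (K * (\<omega> s * \<omega> u))"
      using order_trans[OF g mult_left_mono[OF weight_inf[OF w] K]]
      by (intro mult_left_mono) auto
    finally show ?thesis by (simp add: algebra_simps)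
  qed
  then have "(\<lambda>p. norm (?h p)) summable_on UNIV"
    by (intro Infinite_Sum.abs_summable_on_comparison_test'[OF KN]) auto
  then show h: "?h summable_on UNIV" using abs_summable_summable by blast
  have P: "(\<lambda>(s,u). a s * b u) summable_on UNIV"
    using abs_summable_summable[OF l1w_pair_abs_summable[OF w a b]] .
  have fibre: "(\<Sum>\<^sub>\<infinity>p\<in>{(s,u). inf s u = t}. ?h p) = sl_conv a b t * g t" for t
  proof -
    have "(\<Sum>\<^sub>\<infinity>p\<in>{(s,u). inf s u = t}. ?h p) = (\<Sum>\<^sub>\<infinity>p\<in>{(s,u). inf s u = t}. (\<lambda>(s,u). a s * b u) p * g t)"
      by (rule infsum_cong) auto
    also have "\<dots> = (\<Sum>\<^sub>\<infinity>p\<in>{(s,u). inf s u = t}. (\<lambda>(s,u). a s * b u) p) * g t"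
      by (rule infsum_cmult_left) (rule summable_on_subset_banach[OF P], auto)
    finally show ?thesis unfolding sl_conv_def by simp
  qed
  show "(\<Sum>\<^sub>\<infinity>t. sl_conv a b t * g t) = (\<Sum>\<^sub>\<infinity>(s,u). a s * b u * g (inf s u))"
    using summable_infsum_fibres(2)[OF h, of "\<lambda>(s,u). inf s u"] by (simp only: fibre_inf fibre)
qed

section \<open>Bounded functionals\<close>

lemma dual_bound:
  assumes w: "sl_weight \<omega>" and p: "\<psi> \<in> l1w_dual \<omega>"
  obtains C where "0 \<le> C" "\<And>a. a \<in> l1w \<omega> \<Longrightarrow> norm (\<psi> a) \<le> C * l1w_norm \<omega> a"
proof -
  obtain C where C: "\<And>a. a \<in> l1w \<omega> \<Longrightarrow> norm (\<psi> a) \<le> C * l1w_norm \<omega> a"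
    using p unfolding l1w_dual_def by blast
  have "norm (\<psi> a) \<le> max C 0 * l1w_norm \<omega> a" if "a \<in> l1w \<omega>" for a
    using C[OF that] mult_right_mono[OF max.cobounded1[of C 0] l1w_norm_nonneg[OF w, of a]] by linarith
  then show ?thesis using that[of "max C 0"] by auto
qed

lemma dual_add: "\<psi> \<in> l1w_dual \<omega> \<Longrightarrow> a \<in> l1w \<omega> \<Longrightarrow> b \<in> l1w \<omega> \<Longrightarrow> \<psi> (\<lambda>s. a s + b s) = \<psi> a + \<psi> b"
  unfolding l1w_dual_def by auto

lemma dual_scale: "\<psi> \<in> l1w_dual \<omega> \<Longrightarrow> a \<in> l1w \<omega> \<Longrightarrow> \<psi> (\<lambda>s. c * a s) = c * \<psi> a"
  unfolding l1w_dual_def by auto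

lemma dual_diff:
  assumes w: "sl_weight \<omega>" and p: "\<psi> \<in> l1w_dual \<omega>" and m: "\<mu> \<in> l1w_dual \<omega>"
  shows "(\<lambda>a. \<psi> a - \<mu> a) \<in> l1w_dual \<omega>"
proof -
  obtain C1 where C1: "\<And>a. a \<in> l1w \<omega> \<Longrightarrow> norm (\<psi> a) \<le> C1 * l1w_norm \<omega> a"
    using dual_bound[OF w p] by blast
  obtain C2 where C2: "\<And>a. a \<in> l1w \<omega> \<Longrightarrow> norm (\<mu> a) \<le> C2 * l1w_norm \<omega> a"
    using dual_bound[OF w m] by blast
  have bound: "norm (\<psi> a - \<mu> a) \<le> (C1 + C2) * l1w_norm \<omega> a" if "a \<in> l1w \<omega>" for a
    using norm_triangle_ineq4[of "\<psi> a" "\<mu> a"] C1[OF that] C2[OF that] by (simp add: distrib_right)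
  show ?thesis unfolding l1w_dual_def
  proof (intro CollectI conjI ballI allI exI[of _ "C1 + C2"])
    fix a b assume "a \<in> l1w \<omega>" "b \<in> l1w \<omega>"
    then show "\<psi> (\<lambda>s. a s + b s) - \<mu> (\<lambda>s. a s + b s) = \<psi> a - \<mu> a + (\<psi> b - \<mu> b)"
      by (simp add: dual_add[OF p] dual_add[OF m])
  next
    fix c a assume "a \<in> l1w \<omega>"
    then show "\<psi> (\<lambda>s. c * a s) - \<mu> (\<lambda>s. c * a s) = c * (\<psi> a - \<mu> a)"
      by (simp add: dual_scale[OF p] dual_scale[OF m] algebra_simps)
  qed (rule bound)
qed

lemma dual_finite_combination:
  assumes p: "\<psi> \<in> l1w_dual \<omega>" and w: "sl_weight \<omega>" and A: "finite A"
  shows "(\<lambda>x. \<Sum>s\<in>A. a s * point_mass s x) \<in> l1w \<omega>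
    \<and> \<psi> (\<lambda>x. \<Sum>s\<in>A. a s * point_mass s x) = (\<Sum>s\<in>A. a s * \<psi> (point_mass s))"
  using A
proof (induction A rule: finite_induct)
  case empty
  show ?case using dual_scale[OF p l1w_zero, of 0] l1w_zero by simp
next
  case (insert s A)
  have d: "(\<lambda>x. a s * point_mass s x) \<in> l1w \<omega>" by (rule point_mass_l1w)
  show ?case
    using l1w_add[OF w d insert.IH[THEN conjunct1]] dual_add[OF p d insert.IH[THEN conjunct1]]
      dual_scale[OF p point_mass_l1w', of "a s" s] insert
    by simp
qed

text \<open>A bounded functional is dominated by \<open>K \<parallel>\<cdot>\<parallel>\<close> as soon as it is dominated by \<open>K \<omega>\<close> on
  the point masses: approximate by finitely supported elements.\<close>
lemma dual_bound_by_point_masses: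
  assumes w: "sl_weight \<omega>" and p: "\<psi> \<in> l1w_dual \<omega>"
    and K: "\<And>e. norm (\<psi> (point_mass e)) \<le> K * \<omega> e" and a: "a \<in> l1w \<omega>"
  shows "norm (\<psi> a) \<le> K * l1w_norm \<omega> a"
proof (rule field_le_epsilon)
  fix \<epsilon> :: real assume \<epsilon>: "0 < \<epsilon>"
  obtain C where C: "0 \<le> C" "\<And>a. a \<in> l1w \<omega> \<Longrightarrow> norm (\<psi> a) \<le> C * l1w_norm \<omega> a"
    using dual_bound[OF w p] by blast
  have K0: "0 \<le> K" by (rule weighted_growth_nonneg[OF w K])
  obtain A where A: "finite A" and split: "a = (\<lambda>x. (\<Sum>s\<in>A. a s * point_mass s x) + (if x \<in> A then 0 else a x))"
    and r: "(\<lambda>x. if x \<in> A then 0 else a x) \<in> l1w \<omega>"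
    and rnorm: "l1w_norm \<omega> (\<lambda>x. if x \<in> A then 0 else a x) \<le> \<epsilon> / (C + 1)"
    and head: "(\<Sum>s\<in>A. norm (a s) * \<omega> s) \<le> l1w_norm \<omega> a"
    using l1w_finite_truncation[OF w a, of "\<epsilon> / (C + 1)"] \<epsilon> C(1) by auto
  note fin = dual_finite_combination[OF p w A, of a]
  have "norm (\<psi> (\<lambda>x. \<Sum>s\<in>A. a s * point_mass s x)) \<le> (\<Sum>s\<in>A. norm (a s) * (K * \<omega> s))"
    using fin by (auto intro!: order_trans[OF norm_sum] sum_mono mult_left_mono K simp: norm_mult)
  also have "\<dots> \<le> K * l1w_norm \<omega> a"
    using mult_left_mono[OF head K0] by (simp add: sum_distrib_left algebra_simps)
  finally have bhead: "norm (\<psi> (\<lambda>x. \<Sum>s\<in>A. a s * point_mass s x)) \<le> K * l1w_norm \<omega> a" .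
  have "C * l1w_norm \<omega> (\<lambda>x. if x \<in> A then 0 else a x) \<le> C * (\<epsilon> / (C + 1))"
    by (rule mult_left_mono[OF rnorm C(1)])
  also have "\<dots> \<le> \<epsilon>" using \<epsilon> C(1) by (simp add: field_simps)
  finally have btail: "norm (\<psi> (\<lambda>x. if x \<in> A then 0 else a x)) \<le> \<epsilon>" using C(2)[OF r] by linarith
  have "\<psi> a = \<psi> (\<lambda>x. \<Sum>s\<in>A. a s * point_mass s x) + \<psi> (\<lambda>x. if x \<in> A then 0 else a x)"
    by (subst split) (rule dual_add[OF p fin[THEN conjunct1] r])
  then have "norm (\<psi> a) \<le> norm (\<psi> (\<lambda>x. \<Sum>s\<in>A. a s * point_mass s x)) + norm (\<psi> (\<lambda>x. if x \<in> A then 0 else a x))"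
    by (simp add: norm_triangle_ineq)
  then show "norm (\<psi> a) \<le> K * l1w_norm \<omega> a + \<epsilon>" using bhead btail by linarith
qed

definition pairing :: "('a \<Rightarrow> complex) \<Rightarrow> ('a \<Rightarrow> complex) \<Rightarrow> complex" where
  "pairing g = (\<lambda>a. \<Sum>\<^sub>\<infinity>s. a s * g s)"

lemma pairing_abs_summable:
  assumes a: "a \<in> l1w \<omega>" and g: "\<And>t. norm (g t) \<le> K * \<omega> t"
  shows "(\<lambda>s. norm (a s * g s)) summable_on UNIV"
proof (rule Infinite_Sum.abs_summable_on_comparison_test'[OF summable_on_cmult_right[OF l1w_summable_weighted[OF a], of K]])
  fix s
  have "norm (a s) * norm (g s) \<le> norm (a s) * (K * \<omega> s)" by (rule mult_left_mono[OF g]) simp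
  then show "norm (a s * g s) \<le> K * (norm (a s) * \<omega> s)" by (simp add: norm_mult algebra_simps)
qed

lemma pairing_dual:
  assumes w: "sl_weight \<omega>" and g: "\<And>t. norm (g t) \<le> K * \<omega> t"
  shows "pairing g \<in> l1w_dual \<omega>"
  unfolding l1w_dual_def
proof (intro CollectI conjI ballI allI exI)
  note summable = abs_summable_summable[OF pairing_abs_summable[OF _ g]]
  fix a b assume a: "a \<in> l1w \<omega>" and b: "b \<in> l1w \<omega>"
  show "pairing g (\<lambda>s. a s + b s) = pairing g a + pairing g b"
    unfolding pairing_def using infsum_add[OF summable[OF a] summable[OF b]]
    by (simp add: distrib_right)
next
  fix c a assume a: "a \<in> l1w \<omega>"
  show "pairing g (\<lambda>s. c * a s) = c * pairing g a"
    unfolding pairing_def using infsum_cmult_right[OF abs_summable_summable[OF pairing_abs_summable[OF a g]], of c]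
    by (simp add: mult.assoc)
next
  fix a assume a: "a \<in> l1w \<omega>"
  have "norm (pairing g a) \<le> (\<Sum>\<^sub>\<infinity>s. norm (a s * g s))"
    unfolding pairing_def by (rule norm_infsum_bound[OF pairing_abs_summable[OF a g]])
  also have "\<dots> \<le> (\<Sum>\<^sub>\<infinity>s. K * (norm (a s) * \<omega> s))"
  proof (rule infsum_mono[OF pairing_abs_summable[OF a g] summable_on_cmult_right[OF l1w_summable_weighted[OF a]]])
    fix s
    have "norm (a s) * norm (g s) \<le> norm (a s) * (K * \<omega> s)" by (rule mult_left_mono[OF g]) simp
    then show "norm (a s * g s) \<le> K * (norm (a s) * \<omega> s)" by (simp add: norm_mult algebra_simps)
  qed
  also have "\<dots> = K * l1w_norm \<omega> a" unfolding l1w_norm_def by (rule infsum_cmult_right')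
  finally show "norm (pairing g a) \<le> K * l1w_norm \<omega> a" .
qed

lemma pairing_point_mass: "pairing g (\<lambda>x. c * point_mass e x) = c * g e"
proof -
  have "(\<lambda>s. c * point_mass e s * g s) = (\<lambda>s. if s = e then c * g e else 0)"
    by (auto simp: point_mass_def)
  then show ?thesis unfolding pairing_def by (simp add: infsum_at_point)
qed

lemma pairing_point_mass': "pairing g (point_mass e) = g e"
  using pairing_point_mass[of g 1 e] by simp

lemma pairing_defect:
  assumes w: "sl_weight \<omega>" and a: "a \<in> l1w \<omega>" and b: "b \<in> l1w \<omega>"
    and g: "\<And>t. norm (g t) \<le> K * \<omega> t"
    and D: "\<And>s u. norm (g (inf s u) - g s * g u) \<le> D * (\<omega> s * \<omega> u)"
  shows "norm (pairing g (sl_conv a b) - pairing g a * pairing g b) \<le> D * (l1w_norm \<omega> a * l1w_norm \<omega> b)"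
proof -
  let ?N = "\<lambda>(s,u). (norm (a s) * \<omega> s) * (norm (b u) * \<omega> u)"
  let ?h1 = "\<lambda>(s,u). a s * b u * g (inf s u)"
  let ?h2 = "\<lambda>(s,u). (a s * g s) * (b u * g u)"
  have h2: "?h2 summable_on UNIV"
    using abs_summable_summable[of ?h2] product_abs_summable[OF pairing_abs_summable[OF a g] pairing_abs_summable[OF b g]]
    by (simp add: case_prod_unfold)
  have "pairing g (sl_conv a b) - pairing g a * pairing g b = (\<Sum>\<^sub>\<infinity>p. ?h1 p) - (\<Sum>\<^sub>\<infinity>p. ?h2 p)"
    unfolding pairing_def conv_pairing(2)[OF w a b g]
      infsum_product[OF pairing_abs_summable[OF a g] pairing_abs_summable[OF b g]] ..
  also have "\<dots> = (\<Sum>\<^sub>\<infinity>p. ?h1 p - ?h2 p)" by (rule infsum_diff[symmetric, OF conv_pairing(1)[OF w a b g] h2])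
  finally have diff: "pairing g (sl_conv a b) - pairing g a * pairing g b = (\<Sum>\<^sub>\<infinity>p. ?h1 p - ?h2 p)" .
  have pointwise: "norm (?h1 p - ?h2 p) \<le> D * ?N p" for p
  proof -
    obtain s u where p: "p = (s,u)" by fastforce
    have "norm (?h1 p - ?h2 p) = norm (a s) * norm (b u) * norm (g (inf s u) - g s * g u)"
      by (simp add: p norm_mult[symmetric] algebra_simps)
    also have "\<dots> \<le> norm (a s) * norm (b u) * (D * (\<omega> s * \<omega> u))"
      by (rule mult_left_mono[OF D]) simp
    finally show ?thesis by (simp add: p algebra_simps)
  qed
  have DN: "(\<lambda>p. D * ?N p) summable_on UNIV"
    by (rule summable_on_cmult_right[OF l1w_pair_summable(1)[OF w a b]])
  have hn: "(\<lambda>p. norm (?h1 p - ?h2 p)) summable_on UNIV"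
    by (rule Infinite_Sum.abs_summable_on_comparison_test'[OF DN pointwise])
  have "norm (pairing g (sl_conv a b) - pairing g a * pairing g b) \<le> (\<Sum>\<^sub>\<infinity>p. norm (?h1 p - ?h2 p))"
    unfolding diff by (rule norm_infsum_bound[OF hn])
  also have "\<dots> \<le> (\<Sum>\<^sub>\<infinity>p. D * ?N p)" by (rule infsum_mono[OF hn DN pointwise])
  also have "\<dots> = D * (l1w_norm \<omega> a * l1w_norm \<omega> b)"
    using infsum_cmult_right'[of D ?N] l1w_pair_summable(2)[OF w a b] by simp
  finally show ?thesis .
qed

lemma pairing_mult:
  assumes w: "sl_weight \<omega>" and g: "\<And>t. norm (g t) \<le> K * \<omega> t"
    and m: "\<And>s u. g (inf s u) = g s * g u"
  shows "pairing g \<in> l1w_mult \<omega>"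
  unfolding l1w_mult_def
proof (intro CollectI conjI ballI pairing_dual[OF w g])
  fix a b assume a: "a \<in> l1w \<omega>" and b: "b \<in> l1w \<omega>"
  have "norm (pairing g (sl_conv a b) - pairing g a * pairing g b) \<le> 0 * (l1w_norm \<omega> a * l1w_norm \<omega> b)"
    by (rule pairing_defect[OF w a b g]) (simp add: m)
  then show "pairing g (sl_conv a b) = pairing g a * pairing g b" by simp
qed

section \<open>Defect and distance to the characters\<close>

text \<open>The defect and the dual distance are suprema over unit balls; the suprema are
  attained as bounds because the sets are bounded (using \<open>\<parallel>a * b\<parallel> \<le> \<parallel>a\<parallel> \<parallel>b\<parallel>\<close>).\<close>
lemma defect_le:
  assumes "\<And>a b. a \<in> l1w \<omega> \<Longrightarrow> b \<in> l1w \<omega> \<Longrightarrow> l1w_norm \<omega> a \<le> 1 \<Longrightarrow> l1w_norm \<omega> b \<le> 1 \<Longrightarrow>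
     norm (\<psi> (sl_conv a b) - \<psi> a * \<psi> b) \<le> \<delta>"
  shows "l1w_def \<omega> \<psi> \<le> \<delta>"
  unfolding l1w_def_def
proof (rule cSup_least)
  have "(\<lambda>s. 0) \<in> l1w \<omega> \<and> (\<lambda>s. 0) \<in> l1w \<omega> \<and> l1w_norm \<omega> (\<lambda>s. 0) \<le> 1 \<and> l1w_norm \<omega> (\<lambda>s. 0) \<le> 1"
    by (simp add: l1w_zero l1w_norm_zero)
  then show "{norm (\<psi> (sl_conv a b) - \<psi> a * \<psi> b) | a b.
      a \<in> l1w \<omega> \<and> b \<in> l1w \<omega> \<and> l1w_norm \<omega> a \<le> 1 \<and> l1w_norm \<omega> b \<le> 1} \<noteq> {}" by blast
qed (use assms in auto)

lemma defect_ge: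
  assumes w: "sl_weight \<omega>" and p: "\<psi> \<in> l1w_dual \<omega>" and a: "a \<in> l1w \<omega>" and b: "b \<in> l1w \<omega>"
    and na: "l1w_norm \<omega> a \<le> 1" and nb: "l1w_norm \<omega> b \<le> 1"
  shows "norm (\<psi> (sl_conv a b) - \<psi> a * \<psi> b) \<le> l1w_def \<omega> \<psi>"
proof -
  obtain C where C: "0 \<le> C" "\<And>a. a \<in> l1w \<omega> \<Longrightarrow> norm (\<psi> a) \<le> C * l1w_norm \<omega> a"
    using dual_bound[OF w p] by blast
  have unit: "norm (\<psi> x) \<le> C" if "x \<in> l1w \<omega>" "l1w_norm \<omega> x \<le> 1" for x
    using C(2)[OF that(1)] mult_left_mono[OF that(2) C(1)] by simp
  have "norm (\<psi> (sl_conv a b) - \<psi> a * \<psi> b) \<le> C + C * C"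
    if a: "a \<in> l1w \<omega>" and b: "b \<in> l1w \<omega>" and na: "l1w_norm \<omega> a \<le> 1" and nb: "l1w_norm \<omega> b \<le> 1" for a b
  proof -
    have "l1w_norm \<omega> (sl_conv a b) \<le> 1"
      using conv_l1w(2)[OF w a b] mult_le_one[OF na l1w_norm_nonneg[OF w] nb] by linarith
    then have "norm (\<psi> (sl_conv a b)) \<le> C" by (rule unit[OF conv_l1w(1)[OF w a b]])
    moreover have "norm (\<psi> a) * norm (\<psi> b) \<le> C * C"
      using unit[OF a na] unit[OF b nb] C(1) by (intro mult_mono) auto
    ultimately show ?thesis
      using norm_triangle_ineq4[of "\<psi> (sl_conv a b)" "\<psi> a * \<psi> b"] by (simp add: norm_mult)
  qed
  then have "bdd_above {norm (\<psi> (sl_conv a b) - \<psi> a * \<psi> b) | a b.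
      a \<in> l1w \<omega> \<and> b \<in> l1w \<omega> \<and> l1w_norm \<omega> a \<le> 1 \<and> l1w_norm \<omega> b \<le> 1}"
    by (intro bdd_aboveI[where M="C + C * C"]) auto
  then show ?thesis unfolding l1w_def_def by (rule cSup_upper[rotated]) (use assms in blast)
qed

lemma dual_dist_le:
  assumes "\<And>a. a \<in> l1w \<omega> \<Longrightarrow> l1w_norm \<omega> a \<le> 1 \<Longrightarrow> norm (\<psi> a - \<mu> a) \<le> \<epsilon>"
  shows "l1w_dual_dist \<omega> \<psi> \<mu> \<le> \<epsilon>"
  unfolding l1w_dual_dist_def
proof (rule cSup_least)
  have "(\<lambda>s. 0) \<in> l1w \<omega> \<and> l1w_norm \<omega> (\<lambda>s. 0) \<le> 1" by (simp add: l1w_zero l1w_norm_zero)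
  then show "{norm (\<psi> a - \<mu> a) | a. a \<in> l1w \<omega> \<and> l1w_norm \<omega> a \<le> 1} \<noteq> {}" by blast
qed (use assms in auto)

lemma dual_dist_ge:
  assumes w: "sl_weight \<omega>" and p: "\<psi> \<in> l1w_dual \<omega>" and m: "\<mu> \<in> l1w_dual \<omega>"
    and a: "a \<in> l1w \<omega>" "l1w_norm \<omega> a \<le> 1"
  shows "norm (\<psi> a - \<mu> a) \<le> l1w_dual_dist \<omega> \<psi> \<mu>"
proof -
  obtain C where C: "0 \<le> C" "\<And>a. a \<in> l1w \<omega> \<Longrightarrow> norm (\<psi> a - \<mu> a) \<le> C * l1w_norm \<omega> a"
    using dual_bound[OF w dual_diff[OF w p m]] by blast
  have "norm (\<psi> a - \<mu> a) \<le> C" if "a \<in> l1w \<omega>" "l1w_norm \<omega> a \<le> 1" for a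
    using C(2)[OF that(1)] mult_left_mono[OF that(2) C(1)] by simp
  then have "bdd_above {norm (\<psi> a - \<mu> a) | a. a \<in> l1w \<omega> \<and> l1w_norm \<omega> a \<le> 1}"
    by (intro bdd_aboveI[where M=C]) auto
  then show ?thesis unfolding l1w_dual_dist_def by (rule cSup_upper[rotated]) (use a in blast)
qed

text \<open>The zero functional is a character, so the distance to the characters is an infimum
  over a nonempty set bounded below by \<open>0\<close>.\<close>
lemma zero_mult: "(\<lambda>a. 0) \<in> l1w_mult \<omega>"
  unfolding l1w_mult_def l1w_dual_def by (auto intro!: exI[of _ 0])

lemma dist_mult_le:
  assumes w: "sl_weight \<omega>" and p: "\<psi> \<in> l1w_dual \<omega>" and m: "\<mu> \<in> l1w_mult \<omega>"
  shows "l1w_dist_mult \<omega> \<psi> \<le> l1w_dual_dist \<omega> \<psi> \<mu>"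
  unfolding l1w_dist_mult_def
proof (rule cInf_lower)
  show "l1w_dual_dist \<omega> \<psi> \<mu> \<in> l1w_dual_dist \<omega> \<psi> ` l1w_mult \<omega>" using m by simp
  have "0 \<le> l1w_dual_dist \<omega> \<psi> \<mu>'" if "\<mu>' \<in> l1w_mult \<omega>" for \<mu>'
  proof -
    have "\<mu>' \<in> l1w_dual \<omega>" using that unfolding l1w_mult_def by simp
    from dual_dist_ge[OF w p this l1w_zero] show ?thesis
      by (simp add: l1w_norm_zero) (meson norm_ge_zero order_trans)
  qed
  then show "bdd_below (l1w_dual_dist \<omega> \<psi> ` l1w_mult \<omega>)" by (intro bdd_belowI[where m=0]) auto
qed

lemma dist_mult_lt:
  assumes "l1w_dist_mult \<omega> \<psi> < \<epsilon>"
  obtains \<mu> where "\<mu> \<in> l1w_mult \<omega>" "l1w_dual_dist \<omega> \<psi> \<mu> < \<epsilon>"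
  using cInf_lessD[of "l1w_dual_dist \<omega> \<psi> ` l1w_mult \<omega>"] zero_mult assms
  unfolding l1w_dist_mult_def by blast

lemma pairing_defect_le:
  assumes w: "sl_weight \<omega>" and g: "\<And>t. norm (g t) \<le> K * \<omega> t" and D0: "0 \<le> D"
    and D: "\<And>s u. norm (g (inf s u) - g s * g u) \<le> D * (\<omega> s * \<omega> u)"
  shows "l1w_def \<omega> (pairing g) \<le> D"
proof (rule defect_le)
  fix a b assume a: "a \<in> l1w \<omega>" and b: "b \<in> l1w \<omega>"
    and na: "l1w_norm \<omega> a \<le> 1" and nb: "l1w_norm \<omega> b \<le> 1"
  have "l1w_norm \<omega> a * l1w_norm \<omega> b \<le> 1"
    by (rule mult_le_one[OF na l1w_norm_nonneg[OF w] nb])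
  from mult_left_mono[OF this D0]
  show "norm (pairing g (sl_conv a b) - pairing g a * pairing g b) \<le> D"
    using pairing_defect[OF w a b g D] by simp
qed

text \<open>Testing against normalised point masses \<open>\<delta>\<^sub>e / \<omega>(e)\<close> turns the defect and the dual
  distance into weighted pointwise bounds.\<close>
lemma defect_point_masses:
  assumes w: "sl_weight \<omega>" and p: "\<psi> \<in> l1w_dual \<omega>"
  shows "norm (\<psi> (point_mass (inf e f)) - \<psi> (point_mass e) * \<psi> (point_mass f))
    \<le> l1w_def \<omega> \<psi> * (\<omega> e * \<omega> f)"
proof -
  have we: "0 < \<omega> e" and wf: "0 < \<omega> f" using weight_pos[OF w] by auto
  define ce where "ce = complex_of_real (1 / \<omega> e)"
  define cf where "cf = complex_of_real (1 / \<omega> f)"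
  have "l1w_norm \<omega> (\<lambda>x. ce * point_mass e x) \<le> 1" "l1w_norm \<omega> (\<lambda>x. cf * point_mass f x) \<le> 1"
    unfolding point_mass_norm using we wf by (simp_all add: ce_def cf_def norm_divide)
  then have "norm (\<psi> (sl_conv (\<lambda>x. ce * point_mass e x) (\<lambda>x. cf * point_mass f x))
      - \<psi> (\<lambda>x. ce * point_mass e x) * \<psi> (\<lambda>x. cf * point_mass f x)) \<le> l1w_def \<omega> \<psi>"
    by (rule defect_ge[OF w p point_mass_l1w point_mass_l1w])
  moreover have "\<psi> (sl_conv (\<lambda>x. ce * point_mass e x) (\<lambda>x. cf * point_mass f x))
      - \<psi> (\<lambda>x. ce * point_mass e x) * \<psi> (\<lambda>x. cf * point_mass f x)
      = (ce * cf) * (\<psi> (point_mass (inf e f)) - \<psi> (point_mass e) * \<psi> (point_mass f))"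
    unfolding conv_point_mass
    using dual_scale[OF p point_mass_l1w', of "ce * cf" "inf e f"] dual_scale[OF p point_mass_l1w', of ce e]
      dual_scale[OF p point_mass_l1w', of cf f]
    by (simp add: algebra_simps)
  moreover have "norm (ce * cf) = 1 / (\<omega> e * \<omega> f)"
    using we wf by (simp add: ce_def cf_def norm_mult norm_divide)
  ultimately have "norm (\<psi> (point_mass (inf e f)) - \<psi> (point_mass e) * \<psi> (point_mass f)) / (\<omega> e * \<omega> f)
      \<le> l1w_def \<omega> \<psi>"
    by (simp add: norm_mult)
  then show ?thesis using we wf by (simp add: divide_le_eq)
qed

lemma dual_dist_point_masses:
  assumes w: "sl_weight \<omega>" and p: "\<psi> \<in> l1w_dual \<omega>" and m: "\<mu> \<in> l1w_dual \<omega>"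
  shows "norm (\<psi> (point_mass e) - \<mu> (point_mass e)) \<le> l1w_dual_dist \<omega> \<psi> \<mu> * \<omega> e"
proof -
  have we: "0 < \<omega> e" by (rule weight_pos[OF w])
  define c where "c = complex_of_real (1 / \<omega> e)"
  have "norm (\<psi> (\<lambda>x. c * point_mass e x) - \<mu> (\<lambda>x. c * point_mass e x)) \<le> l1w_dual_dist \<omega> \<psi> \<mu>"
    by (rule dual_dist_ge[OF w p m point_mass_l1w])
       (unfold point_mass_norm, use we in \<open>simp add: c_def norm_divide\<close>)
  moreover have "\<psi> (\<lambda>x. c * point_mass e x) - \<mu> (\<lambda>x. c * point_mass e x)
      = c * (\<psi> (point_mass e) - \<mu> (point_mass e))"
    using dual_scale[OF p point_mass_l1w'] dual_scale[OF m point_mass_l1w'] by (simp add: algebra_simps)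
  moreover have "norm c = 1 / \<omega> e" using we by (simp add: c_def norm_divide)
  ultimately have "norm (\<psi> (point_mass e) - \<mu> (point_mass e)) / \<omega> e \<le> l1w_dual_dist \<omega> \<psi> \<mu>"
    by (simp add: norm_mult)
  then show ?thesis using we by (simp add: divide_le_eq)
qed

section \<open>Characters, filters and rounding\<close>

text \<open>Indicators of filters (and of \<open>{}\<close>) are multiplicative, since \<open>e f \<in> F \<longleftrightarrow> e \<in> F \<and> f \<in> F\<close>.\<close>
lemma indicator_filter_mult:
  assumes "F = {} \<or> sl_filter F"
  shows "(indicator F (inf s u) :: real) = indicator F s * indicator F u"
proof -
  have "inf s u \<in> F \<longleftrightarrow> s \<in> F \<and> u \<in> F" if "sl_filter F"
    using that unfolding sl_filter_def by (meson inf.cobounded1 inf.cobounded2)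
  then show ?thesis using assms by (auto simp: indicator_def)
qed

text \<open>Conversely, a multiplicative function into a domain is idempotent-valued, hence the
  indicator of its support, which is a filter or empty.\<close>
lemma multiplicative_is_filter_indicator:
  fixes m :: "'a::semilattice_inf \<Rightarrow> 'b::idom"
  assumes mult: "\<And>e f. m (inf e f) = m e * m f"
  obtains F where "F = {} \<or> sl_filter F" "\<And>e. m e = (if e \<in> F then 1 else 0)"
proof -
  have m01: "m e = 0 \<or> m e = 1" for e
  proof -
    have "m e * (m e - 1) = 0" using mult[of e e] by (simp add: algebra_simps)
    then show ?thesis by auto
  qed
  define F where "F = {e. m e = 1}"
  have "sl_filter F" if "F \<noteq> {}"
    unfolding sl_filter_def
  proof (intro conjI ballI allI impI that)
    show "inf x y \<in> F" if "x \<in> F" "y \<in> F" for x y using that by (simp add: F_def mult)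
    show "x \<in> F" if "y \<in> F" "y \<le> x" for y x
      using that mult[of y x] by (simp add: F_def inf_absorb1)
  qed
  show ?thesis
  proof (rule that)
    show "F = {} \<or> sl_filter F" using \<open>F \<noteq> {} \<Longrightarrow> sl_filter F\<close> by blast
    show "m e = (if e \<in> F then 1 else 0)" for e using m01[of e] by (auto simp: F_def)
  qed
qed

lemma character_point_masses:
  assumes \<mu>: "\<mu> \<in> l1w_mult \<omega>"
  obtains F where "F = {} \<or> sl_filter F" "\<And>e. \<mu> (point_mass e) = complex_of_real (indicator F e)"
proof -
  have mult: "\<mu> (sl_conv a b) = \<mu> a * \<mu> b" if "a \<in> l1w \<omega>" "b \<in> l1w \<omega>" for a b
    using \<mu> that unfolding l1w_mult_def by blast
  have "\<mu> (point_mass (inf e f)) = \<mu> (point_mass e) * \<mu> (point_mass f)" for e f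
    using mult[OF point_mass_l1w'[of e] point_mass_l1w'[of f]] unfolding conv_point_mass' .
  then obtain F where F: "F = {} \<or> sl_filter F" and mF: "\<And>e. \<mu> (point_mass e) = (if e \<in> F then 1 else 0)"
    using multiplicative_is_filter_indicator[of "\<lambda>e. \<mu> (point_mass e)"] by blast
  show ?thesis by (rule that[OF F]) (simp add: mF indicator_def)
qed

lemma near_idempotent:
  fixes z :: "'b::real_normed_div_algebra"
  assumes "norm (z - z * z) \<le> t * t" and "0 \<le> t"
  shows "norm z \<le> t \<or> norm (z - 1) \<le> t"
proof (rule ccontr)
  assume "\<not> (norm z \<le> t \<or> norm (z - 1) \<le> t)"
  then have "t * t < norm z * norm (z - 1)" using assms(2) by (intro mult_strict_mono) auto
  also have "norm z * norm (z - 1) = norm (z - z * z)"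
    by (simp add: norm_mult[symmetric] algebra_simps norm_minus_commute)
  finally show False using assms(1) by simp
qed

lemma round_to_zero_one:
  fixes z :: "'a::semilattice_inf \<Rightarrow> complex"
  assumes w: "sl_weight \<omega>" and r: "0 \<le> r"
    and idem: "\<And>e. norm (z e - z e * z e) \<le> (r * \<omega> e) * (r * \<omega> e)"
  obtains \<rho> :: "'a \<Rightarrow> real" where "range \<rho> \<subseteq> {0, 1}" "\<And>e. norm (z e - complex_of_real (\<rho> e)) \<le> r * \<omega> e"
proof
  define \<rho> where "\<rho> e = (if norm (z e - 1) \<le> r * \<omega> e then 1 else (0::real))" for e
  show "range \<rho> \<subseteq> {0, 1}" by (auto simp: \<rho>_def)
  show "norm (z e - complex_of_real (\<rho> e)) \<le> r * \<omega> e" for e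
  proof (cases "norm (z e - 1) \<le> r * \<omega> e")
    case False
    then have "norm (z e) \<le> r * \<omega> e"
      using near_idempotent[OF idem[of e]] r weight_pos[OF w, of e] by simp
    then show ?thesis using False by (simp add: \<rho>_def)
  qed (simp add: \<rho>_def)
qed

text \<open>Rounding a function with weighted defect \<open>r\<^sup>2\<close> to within \<open>r \<omega>\<close> of a 0/1-valued function
  costs a weighted defect of at most \<open>5 r\<close> (for \<open>r \<le> 1\<close>, using \<open>\<omega> \<ge> 1\<close>).\<close>
lemma rounding_defect:
  assumes w: "sl_weight \<omega>" and r0: "0 \<le> r" and r1: "r \<le> 1"
    and Z: "\<And>e f. norm (z (inf e f) - z e * z f) \<le> (r * r) * (\<omega> e * \<omega> f)"
    and R: "\<And>e. norm (z e - complex_of_real (\<rho> e)) \<le> r * \<omega> e"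
    and \<rho>01: "range \<rho> \<subseteq> {0, 1}"
  shows "\<bar>\<rho> (inf e f) - \<rho> e * \<rho> f\<bar> \<le> 5 * r * (\<omega> e * \<omega> f)"
proof -
  let ?P = "\<lambda>e. complex_of_real (\<rho> e)"
  let ?W = "\<omega> e * \<omega> f"
  have we: "1 \<le> \<omega> e" and wf: "1 \<le> \<omega> f" using weight_ge_1[OF w] by auto
  have W: "\<omega> e \<le> ?W" "\<omega> f \<le> ?W"
    using we wf by (simp_all add: mult_le_cancel_left1 mult_le_cancel_right1)
  have W1: "0 \<le> ?W" using we wf by simp
  have rr: "r * r \<le> r" by (rule mult_left_le[OF r1 r0])
  have Pn: "norm (?P x) \<le> 1" for x
  proof -
    have "\<rho> x = 0 \<or> \<rho> x = 1" using \<rho>01 by auto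
    then show ?thesis by auto
  qed
  have zf: "norm (z f) \<le> 1 + r * \<omega> f"
    using norm_triangle_ineq[of "z f - ?P f" "?P f"] R[of f] Pn[of f] by simp
  have t1: "norm (?P (inf e f) - z (inf e f)) \<le> r * ?W"
  proof -
    have "r * \<omega> (inf e f) \<le> r * ?W" by (rule mult_left_mono[OF weight_inf[OF w] r0])
    then show ?thesis using R[of "inf e f"] by (simp add: norm_minus_commute)
  qed
  have t2: "norm (z (inf e f) - z e * z f) \<le> r * ?W"
    using Z[of e f] mult_right_mono[OF rr W1] by linarith
  have "norm ((z e - ?P e) * z f) \<le> (r * \<omega> e) * (1 + r * \<omega> f)"
    unfolding norm_mult by (rule mult_mono[OF R zf]) (use r0 we in auto)
  also have "\<dots> = r * \<omega> e + (r * r) * ?W" by (simp add: algebra_simps)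
  also have "\<dots> \<le> 2 * r * ?W"
    using mult_left_mono[OF W(1) r0] mult_right_mono[OF rr W1] by linarith
  finally have t3: "norm ((z e - ?P e) * z f) \<le> 2 * r * ?W" .
  have "norm (?P e * (z f - ?P f)) \<le> 1 * (r * \<omega> f)"
    unfolding norm_mult by (rule mult_mono[OF Pn R]) auto
  then have t4: "norm (?P e * (z f - ?P f)) \<le> r * ?W"
    using mult_left_mono[OF W(2) r0] by linarith
  have eq: "?P (inf e f) - ?P e * ?P f = (?P (inf e f) - z (inf e f)) + (z (inf e f) - z e * z f)
      + ((z e - ?P e) * z f + ?P e * (z f - ?P f))" by (simp add: algebra_simps)
  have "norm (?P (inf e f) - ?P e * ?P f) \<le> norm (?P (inf e f) - z (inf e f)) + norm (z (inf e f) - z e * z f)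
      + (norm ((z e - ?P e) * z f) + norm (?P e * (z f - ?P f)))"
    unfolding eq by (rule order_trans[OF norm_triangle_ineq add_mono[OF norm_triangle_ineq norm_triangle_ineq]])
  also have "\<dots> \<le> r * ?W + r * ?W + (2 * r * ?W + r * ?W)"
    using t1 t2 t3 t4 by (intro add_mono)
  also have "\<dots> = 5 * r * ?W" by simp
  finally have "norm (?P (inf e f) - ?P e * ?P f) \<le> 5 * r * ?W" .
  moreover have "norm (?P (inf e f) - ?P e * ?P f) = \<bar>\<rho> (inf e f) - \<rho> e * \<rho> f\<bar>"
    by (metis norm_of_real of_real_diff of_real_mult)
  ultimately show ?thesis by simp
qed

lemma round_point_masses:
  assumes w: "sl_weight \<omega>" and p: "\<psi> \<in> l1w_dual \<omega>" and def: "l1w_def \<omega> \<psi> \<le> r * r"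
    and r0: "0 \<le> r" and r1: "r \<le> 1"
  obtains \<rho> :: "'a::semilattice_inf \<Rightarrow> real" where "range \<rho> \<subseteq> {0, 1}"
    "\<And>e. norm (\<psi> (point_mass e) - complex_of_real (\<rho> e)) \<le> r * \<omega> e"
    "\<And>e f. \<bar>\<rho> (inf e f) - \<rho> e * \<rho> f\<bar> \<le> 5 * r * (\<omega> e * \<omega> f)"
proof -
  define z where "z e = \<psi> (point_mass e)" for e
  have Z: "norm (z (inf e f) - z e * z f) \<le> (r * r) * (\<omega> e * \<omega> f)" for e f
  proof -
    have "l1w_def \<omega> \<psi> * (\<omega> e * \<omega> f) \<le> (r * r) * (\<omega> e * \<omega> f)"
      using def weight_pos[OF w, of e] weight_pos[OF w, of f] by (intro mult_right_mono) auto
    then show ?thesis using defect_point_masses[OF w p, of e f] unfolding z_def by linarith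
  qed
  have "norm (z e - z e * z e) \<le> (r * \<omega> e) * (r * \<omega> e)" for e
    using Z[of e e] by (simp add: algebra_simps)
  then obtain \<rho> where \<rho>01: "range \<rho> \<subseteq> {0, 1}" and R: "\<And>e. norm (z e - complex_of_real (\<rho> e)) \<le> r * \<omega> e"
    using round_to_zero_one[OF w r0] by blast
  show ?thesis
    by (rule that[OF \<rho>01 R[unfolded z_def] rounding_defect[OF w r0 r1 Z R \<rho>01]])
qed

lemma near_character_point_masses:
  assumes w: "sl_weight \<omega>" and p: "\<psi> \<in> l1w_dual \<omega>" and \<mu>: "\<mu> \<in> l1w_mult \<omega>"
    and dist: "l1w_dual_dist \<omega> \<psi> \<mu> \<le> \<epsilon>"
  obtains F where "F = {} \<or> sl_filter F"
    "\<And>e. norm (\<psi> (point_mass e) - complex_of_real (indicator F e)) \<le> \<epsilon> * \<omega> e"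
proof -
  obtain F where F: "F = {} \<or> sl_filter F" and \<mu>F: "\<And>e. \<mu> (point_mass e) = complex_of_real (indicator F e)"
    using character_point_masses[OF \<mu>] by blast
  have "norm (\<psi> (point_mass e) - complex_of_real (indicator F e)) \<le> \<epsilon> * \<omega> e" for e
  proof -
    have "norm (\<psi> (point_mass e) - \<mu> (point_mass e)) \<le> l1w_dual_dist \<omega> \<psi> \<mu> * \<omega> e"
      using dual_dist_point_masses[OF w p] \<mu> unfolding l1w_mult_def by blast
    also have "\<dots> \<le> \<epsilon> * \<omega> e" using dist weight_pos[OF w, of e] by simp
    finally show ?thesis by (simp add: \<mu>F)
  qed
  with F that show ?thesis by blast
qed

lemma close_to_filter_character:
  assumes w: "sl_weight \<omega>" and p: "\<psi> \<in> l1w_dual \<omega>" and F: "F = {} \<or> sl_filter F"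
    and close: "\<And>e. norm (\<psi> (point_mass e) - complex_of_real (indicator F e)) \<le> \<epsilon> * \<omega> e"
  shows "l1w_dist_mult \<omega> \<psi> \<le> \<epsilon>"
proof -
  define g where "g s = complex_of_real (indicator F s)" for s
  have g: "norm (g t) \<le> 1 * \<omega> t" for t
    using weight_ge_1[OF w, of t] by (simp add: g_def indicator_def)
  have "g (inf s u) = g s * g u" for s u
    using indicator_filter_mult[OF F, of s u] by (simp add: g_def)
  then have char: "pairing g \<in> l1w_mult \<omega>" by (rule pairing_mult[OF w g])
  have diff: "(\<lambda>a. \<psi> a - pairing g a) \<in> l1w_dual \<omega>" by (rule dual_diff[OF w p pairing_dual[OF w g]])
  have "l1w_dual_dist \<omega> \<psi> (pairing g) \<le> \<epsilon>"
  proof (rule dual_dist_le)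
    fix a assume a: "a \<in> l1w \<omega>" and na: "l1w_norm \<omega> a \<le> 1"
    have "norm (\<psi> a - pairing g a) \<le> \<epsilon> * l1w_norm \<omega> a"
      by (rule dual_bound_by_point_masses[OF w diff _ a]) (simp add: pairing_point_mass' g_def close)
    also have "\<dots> \<le> \<epsilon>"
      using mult_left_mono[OF na weighted_growth_nonneg[OF w close]] by simp
    finally show "norm (\<psi> a - pairing g a) \<le> \<epsilon>" .
  qed
  then show ?thesis using dist_mult_le[OF w p char] by simp
qed

definition filter_approximable :: "('a::semilattice_inf \<Rightarrow> real) \<Rightarrow> bool" where
  "filter_approximable \<omega> \<longleftrightarrow> (\<forall>\<epsilon>>0. \<exists>\<delta>>0. \<forall>\<phi> :: 'a \<Rightarrow> real. range \<phi> \<subseteq> {0, 1} \<longrightarrow>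
        (\<forall>e f. \<bar>\<phi> (inf e f) - \<phi> e * \<phi> f\<bar> / (\<omega> e * \<omega> f) \<le> \<delta>) \<longrightarrow>
        (\<exists>F. (F = {} \<or> sl_filter F) \<and> (\<forall>e. \<bar>indicator F e - \<phi> e\<bar> / \<omega> e \<le> \<epsilon>)))"

text \<open>(i) \<Longrightarrow> (ii): view \<open>\<phi>\<close> as a functional, approximate it by a character, and read off the
  filter from the character's values on point masses.\<close>
lemma AMNM_imp_filter_approximable:
  assumes w: "sl_weight \<omega>" and AMNM: "l1w_AMNM \<omega>"
  shows "filter_approximable \<omega>"
  unfolding filter_approximable_def
proof (intro allI impI)
  fix \<epsilon> :: real assume \<epsilon>: "0 < \<epsilon>"
  have "0 < \<epsilon> / 2" using \<epsilon> by simp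
  from AMNM[unfolded l1w_AMNM_def, rule_format, OF this]
  obtain \<delta> where \<delta>: "0 < \<delta>"
    and near: "\<forall>\<psi>\<in>l1w_dual \<omega>. l1w_def \<omega> \<psi> \<le> \<delta> \<longrightarrow> l1w_dist_mult \<omega> \<psi> \<le> \<epsilon> / 2"
    by blast
  have "\<exists>F. (F = {} \<or> sl_filter F) \<and> (\<forall>e. \<bar>indicator F e - \<phi> e\<bar> / \<omega> e \<le> \<epsilon>)"
    if \<phi>01: "range \<phi> \<subseteq> {0, 1}" and small: "\<forall>e f. \<bar>\<phi> (inf e f) - \<phi> e * \<phi> f\<bar> / (\<omega> e * \<omega> f) \<le> \<delta>"
    for \<phi> :: "'a \<Rightarrow> real"
  proof -
    define g where "g s = complex_of_real (\<phi> s)" for s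
    have g: "norm (g t) \<le> 1 * \<omega> t" for t
    proof -
      have "\<phi> t = 0 \<or> \<phi> t = 1" using \<phi>01 by auto
      then show ?thesis using weight_ge_1[OF w, of t] by (auto simp: g_def)
    qed
    have "norm (g (inf s u) - g s * g u) \<le> \<delta> * (\<omega> s * \<omega> u)" for s u
      using small weight_pos[OF w, of s] weight_pos[OF w, of u]
      by (simp add: g_def divide_le_eq flip: of_real_mult of_real_diff)
    then have "l1w_def \<omega> (pairing g) \<le> \<delta>" by (rule pairing_defect_le[OF w g less_imp_le[OF \<delta>]])
    then have "l1w_dist_mult \<omega> (pairing g) < \<epsilon>"
      using near pairing_dual[OF w g] \<epsilon> by fastforce
    then obtain \<mu> where \<mu>: "\<mu> \<in> l1w_mult \<omega>" and dist: "l1w_dual_dist \<omega> (pairing g) \<mu> < \<epsilon>"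
      by (rule dist_mult_lt)
    obtain F where F: "F = {} \<or> sl_filter F"
      and close: "\<And>e. norm (pairing g (point_mass e) - complex_of_real (indicator F e)) \<le> \<epsilon> * \<omega> e"
      using near_character_point_masses[OF w pairing_dual[OF w g] \<mu> less_imp_le[OF dist]] by blast
    have "\<bar>indicator F e - \<phi> e\<bar> / \<omega> e \<le> \<epsilon>" for e
      using close[of e] weight_pos[OF w, of e]
      by (simp add: pairing_point_mass' g_def divide_le_eq abs_minus_commute flip: of_real_diff)
    with F show ?thesis by blast
  qed
  with \<delta> show "\<exists>\<delta>>0. \<forall>\<phi> :: 'a \<Rightarrow> real. range \<phi> \<subseteq> {0, 1} \<longrightarrow>
        (\<forall>e f. \<bar>\<phi> (inf e f) - \<phi> e * \<phi> f\<bar> / (\<omega> e * \<omega> f) \<le> \<delta>) \<longrightarrow>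
        (\<exists>F. (F = {} \<or> sl_filter F) \<and> (\<forall>e. \<bar>indicator F e - \<phi> e\<bar> / \<omega> e \<le> \<epsilon>))" by blast
qed

text \<open>(ii) \<Longrightarrow> (i): a functional with defect \<open>r\<^sup>2\<close> rounds on point masses to a 0/1-valued
  function of defect \<open>5r\<close>; (ii) provides a filter near it, whose character is then near \<open>\<psi>\<close>.\<close>
lemma filter_approximable_imp_AMNM:
  assumes w: "sl_weight \<omega>" and approx: "filter_approximable \<omega>"
  shows "l1w_AMNM \<omega>"
  unfolding l1w_AMNM_def
proof (intro allI impI)
  fix \<epsilon> :: real assume \<epsilon>: "0 < \<epsilon>"
  have "0 < \<epsilon> / 2" using \<epsilon> by simp
  from approx[unfolded filter_approximable_def, rule_format, OF this]
  obtain \<delta> where \<delta>: "0 < \<delta>" and filter: "\<forall>\<phi> :: 'a \<Rightarrow> real. range \<phi> \<subseteq> {0, 1} \<longrightarrow>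
        (\<forall>e f. \<bar>\<phi> (inf e f) - \<phi> e * \<phi> f\<bar> / (\<omega> e * \<omega> f) \<le> \<delta>) \<longrightarrow>
        (\<exists>F. (F = {} \<or> sl_filter F) \<and> (\<forall>e. \<bar>indicator F e - \<phi> e\<bar> / \<omega> e \<le> \<epsilon> / 2))"
    by blast
  define r where "r = min 1 (min (\<delta> / 5) (\<epsilon> / 2))"
  have r0: "0 < r" and r1: "r \<le> 1" and r\<delta>: "5 * r \<le> \<delta>" and r\<epsilon>: "r \<le> \<epsilon> / 2"
    using \<delta> \<epsilon> by (auto simp: r_def)
  have "l1w_dist_mult \<omega> \<psi> \<le> \<epsilon>" if p: "\<psi> \<in> l1w_dual \<omega>" and def: "l1w_def \<omega> \<psi> \<le> r * r" for \<psi>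
  proof -
    obtain \<rho> where \<rho>01: "range \<rho> \<subseteq> {0, 1}"
      and R: "\<And>e. norm (\<psi> (point_mass e) - complex_of_real (\<rho> e)) \<le> r * \<omega> e"
      and D: "\<And>e f. \<bar>\<rho> (inf e f) - \<rho> e * \<rho> f\<bar> \<le> 5 * r * (\<omega> e * \<omega> f)"
      using round_point_masses[OF w p def less_imp_le[OF r0] r1] by blast
    have small: "\<bar>\<rho> (inf e f) - \<rho> e * \<rho> f\<bar> / (\<omega> e * \<omega> f) \<le> \<delta>" for e f
    proof -
      have "5 * r * (\<omega> e * \<omega> f) \<le> \<delta> * (\<omega> e * \<omega> f)"
        using r\<delta> weight_pos[OF w, of e] weight_pos[OF w, of f] by (intro mult_right_mono) auto
      then have "\<bar>\<rho> (inf e f) - \<rho> e * \<rho> f\<bar> \<le> \<delta> * (\<omega> e * \<omega> f)"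
        using D[of e f] by linarith
      then show ?thesis using weight_pos[OF w, of e] weight_pos[OF w, of f] by (simp add: divide_le_eq)
    qed
    from filter[rule_format, OF \<rho>01 small]
    obtain F where F: "F = {} \<or> sl_filter F" and near: "\<And>e. \<bar>indicator F e - \<rho> e\<bar> / \<omega> e \<le> \<epsilon> / 2"
      by blast
    have "norm (\<psi> (point_mass e) - complex_of_real (indicator F e)) \<le> \<epsilon> * \<omega> e" for e
    proof -
      have "\<bar>\<rho> e - indicator F e\<bar> \<le> \<epsilon> / 2 * \<omega> e"
        using near[of e] weight_pos[OF w, of e] by (simp add: divide_le_eq abs_minus_commute)
      then have "norm (complex_of_real (\<rho> e) - complex_of_real (indicator F e)) \<le> \<epsilon> / 2 * \<omega> e"
        by (simp flip: of_real_diff)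
      moreover have "r * \<omega> e \<le> \<epsilon> / 2 * \<omega> e" using r\<epsilon> weight_pos[OF w, of e] by simp
      moreover have "norm (\<psi> (point_mass e) - complex_of_real (indicator F e))
          \<le> norm (\<psi> (point_mass e) - complex_of_real (\<rho> e))
            + norm (complex_of_real (\<rho> e) - complex_of_real (indicator F e))"
        using norm_triangle_ineq[of "\<psi> (point_mass e) - complex_of_real (\<rho> e)"
            "complex_of_real (\<rho> e) - complex_of_real (indicator F e)"]
        by simp
      ultimately show ?thesis using R[of e] by linarith
    qed
    then show ?thesis by (rule close_to_filter_character[OF w p F])
  qed
  then show "\<exists>\<delta>>0. \<forall>\<psi>\<in>l1w_dual \<omega>. l1w_def \<omega> \<psi> \<le> \<delta> \<longrightarrow> l1w_dist_mult \<omega> \<psi> \<le> \<epsilon>"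
    using r0 by (meson mult_pos_pos)
qed

theorem corollaryc:
  fixes \<omega> :: "'a::semilattice_inf \<Rightarrow> real"
  assumes "sl_weight \<omega>"
  shows "l1w_AMNM \<omega> \<longleftrightarrow>
    (\<forall>\<epsilon>>0. \<exists>\<delta>>0. \<forall>\<phi> :: 'a \<Rightarrow> real. range \<phi> \<subseteq> {0, 1} \<longrightarrow>
        (\<forall>e f. \<bar>\<phi> (inf e f) - \<phi> e * \<phi> f\<bar> / (\<omega> e * \<omega> f) \<le> \<delta>) \<longrightarrow>
        (\<exists>F. (F = {} \<or> sl_filter F) \<and> (\<forall>e. \<bar>indicator F e - \<phi> e\<bar> / \<omega> e \<le> \<epsilon>)))"
  using AMNM_imp_filter_approximable[OF assms] filter_approximable_imp_AMNM[OF assms]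
  unfolding filter_approximable_def by blast

end
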